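(* Let $m\in\mathbb R$ be the unique minimizing point of $M$, let $s>1$, and suppose there is $x_0>0$ with $\mathbb E[|D^+h(X_1,m+x)|^s]<\infty$ for all $x\in[-x_0,x_0]$. Then for every $x>0$, $$\mathbb P\Big(\sup_{k\ge n}|\hat m_k-m|>x\Big)=o(n^{-s+1}),\qquad n\to\infty.$$
   Context: Let $(S,\mathcal S,Q)$ be a probability space and $h:S\times\mathbb R\to\mathbb R$ such that $h(\cdot,t)$ is $\mathcal S$-measurable for every $t\in\mathbb R$ and $h(x,\cdot)$ is convex for every $x\in S$. For $f:\mathbb R\to\mathbb R$ convex, $D^+f$ and $D^-f$ denote its right and left derivatives; $D^\pm h(x,t)$ denotes the one-sided derivatives of $h(x,\cdot)$ at $t$. Assume $\int_S|D^+h(x,t)|\,Q(dx)<\infty$ and $\int_S|D^-h(x,t)|\,Q(dx)<\infty$ for all $t\in\mathbb R$. Fix $t_0\in\mathbb R$ and set $M(t):=\int_S (h(x,t)-h(x,t_0))\,Q(dx)$; $M$ is real-valued and convex with $D^\pm M(t)=\int_S D^\pm h(x,t)\,Q(dx)$. Let $X_1,X_2,\dots$ be i.i.d. $S$-valued random variables on a probability space $(\Omega,\mathcal A,\mathbb P)$ with common law $Q$, let $M_n(t):=\frac1n\sum_{i=1}^n (h(X_i,t)-h(X_i,t_0))$, and let $\hat m_n$ be the smallest minimizing point of $M_n$ (assumed to exist; it is a random variable). *)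

theory Defs
  imports "HOL-Probability.Probability" "HOL-Library.Landau_Symbols"
begin

definition rderiv :: "(real \<Rightarrow> real) \<Rightarrow> real \<Rightarrow> real" where
  "rderiv f t = Lim (at_right 0) (\<lambda>d. (f (t + d) - f t) / d)"

definition lderiv :: "(real \<Rightarrow> real) \<Rightarrow> real \<Rightarrow> real" where
  "lderiv f t = Lim (at_left 0) (\<lambda>d. (f (t + d) - f t) / d)"

definition popM :: "'s measure \<Rightarrow> ('s \<Rightarrow> real \<Rightarrow> real) \<Rightarrow> real \<Rightarrow> real \<Rightarrow> real" where
  "popM Q h t0 t = (\<integral>x. (h x t - h x t0) \<partial>Q)"

text \<open>Empirical criterion M_n(t) = (1/n) sum_{i<n} (h(X_i,t) - h(X_i,t0)); samples indexed from 0.\<close>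
definition empM :: "(nat \<Rightarrow> 'w \<Rightarrow> 's) \<Rightarrow> ('s \<Rightarrow> real \<Rightarrow> real) \<Rightarrow> real \<Rightarrow> nat \<Rightarrow> 'w \<Rightarrow> real \<Rightarrow> real" where
  "empM X h t0 n \<omega> t = (1 / real n) * (\<Sum>i<n. (h (X i \<omega>) t - h (X i \<omega>) t0))"

end

theory Submission
  imports Defs
begin

(*
  Convexity turns the deviation event into a sign condition on derivatives: with r = min x x0,
  |mhat k - m| > x forces sum_{i<k} D+h(X_i, m + r) <= 0 or sum_{i<k} D+h(X_i, m - r) >= 0,
  whereas the expectations of these summands are > 0 and < 0 because m is the unique minimiser
  of M.  It therefore suffices to show P(exists k >= n. S_k <= 0) = o(n^(1-s)) for partial sums
  S_k of i.i.d. variables Y_i with E Y > 0 and E|Y|^s < oo.  Truncating Y_i from below at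
  -eps (i + n), the probability that some truncation is active is at most
  sum_i P(|Y| > eps (i + n)) <= E(|Y|^s; |Y| > eps n) O(n^(1-s)) = o(n^(1-s)).  The truncated sums,
  also clamped from above, obey a Chernoff bound at rate lambda = a ln k / (beta k) which is
  k^-(s+1) for large k, and these bounds sum to O(n^-s) over k >= n.
*)

section \<open>Right derivatives of convex functions\<close>

lemma convex_on_rderiv_slope_bounds:
  fixes f :: "real \<Rightarrow> real"
  assumes cv: "convex_on UNIV f" and d: "d > 0"
  shows "(f t - f (t - d)) / d \<le> rderiv f t" "rderiv f t \<le> (f (t + d) - f t) / d"
proof -
  define q where "q e = (f (t + e) - f t) / e" for e
  have q_mono: "q e1 \<le> q e2" if "0 < e1" "e1 < e2" for e1 e2
    using convex_on_slope_le(1)[OF cv, of t "t + e2" "t + e1"] that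
    unfolding q_def by (simp add: field_simps)
  have q_lower: "(f t - f (t - d)) / d \<le> q e" if "0 < e" for e
    using convex_on_slope_le[OF cv, of "t - d" "t + e" t] that d
    unfolding q_def by (simp add: field_simps)
  define I where "I = Inf (q ` {0<..})"
  have bdd: "bdd_below (q ` {0<..})" using q_lower by (auto intro!: bdd_belowI2)
  have I_le: "I \<le> q e" if "e > 0" for e
    unfolding I_def using bdd that by (auto intro!: cInf_lower)
  have "(q \<longlongrightarrow> I) (at_right 0)"
  proof (rule order_tendstoI)
    fix a assume "a < I"
    show "eventually (\<lambda>e. a < q e) (at_right 0)"
      using eventually_at_right_real[of 0 1, simplified]
      by (rule eventually_mono) (use I_le \<open>a < I\<close> in force)
  next
    fix a assume "I < a"
    then obtain e0 where e0: "e0 > 0" "q e0 < a"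
      unfolding I_def using cInf_less_iff[of "q ` {0<..}" a] bdd by auto
    show "eventually (\<lambda>e. q e < a) (at_right 0)"
      using eventually_at_right_real[OF e0(1)]
      by (rule eventually_mono) (use q_mono e0 in fastforce)
  qed
  then have "rderiv f t = I"
    unfolding rderiv_def q_def by (intro tendsto_Lim) auto
  moreover have "(f t - f (t - d)) / d \<le> I"
    unfolding I_def by (rule cInf_greatest) (auto intro: q_lower)
  ultimately show "(f t - f (t - d)) / d \<le> rderiv f t" "rderiv f t \<le> (f (t + d) - f t) / d"
    using I_le[OF d] by (auto simp: q_def)
qed

lemma convex_on_rderiv_increment_bounds:
  fixes f :: "real \<Rightarrow> real"
  assumes "convex_on UNIV f" "a < b"
  shows "rderiv f a * (b - a) \<le> f b - f a" "f b - f a \<le> rderiv f b * (b - a)"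
  using convex_on_rderiv_slope_bounds[OF assms(1), of "b - a" a]
    convex_on_rderiv_slope_bounds[OF assms(1), of "b - a" b] assms(2)
  by (auto simp: field_simps)

lemma convex_on_abs_diff_le_rderiv:
  fixes f :: "real \<Rightarrow> real"
  assumes "convex_on UNIV f"
  shows "\<bar>f b - f a\<bar> \<le> \<bar>b - a\<bar> * (\<bar>rderiv f a\<bar> + \<bar>rderiv f b\<bar>)"
proof -
  have *: "\<bar>f v - f u\<bar> \<le> (v - u) * (\<bar>rderiv f u\<bar> + \<bar>rderiv f v\<bar>)" if "u < v" for u v
  proof -
    have "(v - u) * (- \<bar>rderiv f u\<bar>) \<le> (v - u) * rderiv f u"
         "(v - u) * rderiv f v \<le> (v - u) * \<bar>rderiv f v\<bar>"
      using that by (intro mult_left_mono; simp)+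
    moreover have "0 \<le> (v - u) * \<bar>rderiv f u\<bar>" "0 \<le> (v - u) * \<bar>rderiv f v\<bar>"
      using that by auto
    ultimately show ?thesis
      using convex_on_rderiv_increment_bounds[OF assms that]
      unfolding abs_le_iff distrib_left by (simp add: mult.commute)
  qed
  show ?thesis
    using *[of a b] *[of b a] by (cases a b rule: linorder_cases) (auto simp: abs_minus_commute add.commute)
qed

lemma convex_sum_rderiv_sign_at_minimizer:
  fixes f :: "'i \<Rightarrow> real \<Rightarrow> real"
  assumes cv: "\<And>i. i \<in> I \<Longrightarrow> convex_on UNIV (f i)"
    and min: "\<And>u. (\<Sum>i\<in>I. f i mh) \<le> (\<Sum>i\<in>I. f i u)"
  shows "t < mh \<Longrightarrow> (\<Sum>i\<in>I. rderiv (f i) t) \<le> 0"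
    and "mh < t \<Longrightarrow> 0 \<le> (\<Sum>i\<in>I. rderiv (f i) t)"
proof -
  assume "t < mh"
  then have "(\<Sum>i\<in>I. rderiv (f i) t) * (mh - t) \<le> (\<Sum>i\<in>I. f i mh - f i t)"
    unfolding sum_distrib_right by (intro sum_mono convex_on_rderiv_increment_bounds(1) cv)
  also have "\<dots> \<le> 0" using min[of t] by (simp add: sum_subtractf)
  finally show "(\<Sum>i\<in>I. rderiv (f i) t) \<le> 0"
    using \<open>t < mh\<close> by (simp add: mult_le_0_iff)
next
  assume "mh < t"
  have "0 \<le> (\<Sum>i\<in>I. f i t - f i mh)" using min[of t] by (simp add: sum_subtractf)
  also have "\<dots> \<le> (\<Sum>i\<in>I. rderiv (f i) t) * (t - mh)"
    unfolding sum_distrib_right using \<open>mh < t\<close>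
    by (intro sum_mono convex_on_rderiv_increment_bounds(2) cv)
  finally show "0 \<le> (\<Sum>i\<in>I. rderiv (f i) t)"
    using \<open>mh < t\<close> by (simp add: zero_le_mult_iff)
qed

lemma exp_le_1_plus_quadratic:
  fixes w c :: real
  assumes "w \<le> c" "0 \<le> c"
  shows "exp w \<le> 1 + w + w\<^sup>2 * exp c / 2"
proof (cases "w \<le> 0")
  case True
  obtain t where t: "exp w = (\<Sum>m<3. w ^ m / fact m) + exp t / fact 3 * w ^ 3"
    using Maclaurin_exp_le[of w 3] by blast
  have "w ^ 3 \<le> 0" using True by (simp add: power_le_zero_eq)
  then have "exp t / fact 3 * w ^ 3 \<le> 0" by (intro mult_nonneg_nonpos) auto
  moreover have "(\<Sum>m<3. w ^ m / fact m) = 1 + w + w\<^sup>2 / 2"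
    by (simp add: numeral_3_eq_3 power2_eq_square)
  moreover have "w\<^sup>2 / 2 \<le> w\<^sup>2 * exp c / 2"
    using assms by (simp add: mult_le_cancel_left1)
  ultimately show ?thesis using t by linarith
next
  case False
  obtain t where t: "\<bar>t\<bar> \<le> \<bar>w\<bar>" "exp w = (\<Sum>m<2. w ^ m / fact m) + exp t / fact 2 * w ^ 2"
    using Maclaurin_exp_le[of w 2] by blast
  have "exp t \<le> exp c" using t(1) False assms by auto
  then have "exp t / fact 2 * w ^ 2 \<le> w\<^sup>2 * exp c / 2"
    by (simp add: mult.commute mult_right_mono)
  moreover have "(\<Sum>m<2. w ^ m / fact m) = 1 + w"
    by (simp add: numeral_2_eq_2)
  ultimately show ?thesis using t by linarith
qed

lemma square_le_powr_interpolation: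
  fixes c y B \<sigma> :: real
  assumes "\<bar>c\<bar> \<le> \<bar>y\<bar>" "\<bar>c\<bar> \<le> B" "0 \<le> \<sigma>" "\<sigma> \<le> 2"
  shows "c\<^sup>2 \<le> B powr (2 - \<sigma>) * \<bar>y\<bar> powr \<sigma>"
proof (cases "c = 0")
  case False
  have "c\<^sup>2 = \<bar>c\<bar> powr \<sigma> * \<bar>c\<bar> powr (2 - \<sigma>)"
    by (simp add: False powr_numeral flip: powr_add)
  also have "\<dots> \<le> \<bar>y\<bar> powr \<sigma> * B powr (2 - \<sigma>)"
    using assms by (intro mult_mono powr_mono2) auto
  finally show ?thesis by (simp add: mult.commute)
qed simp

lemma powr_neg_le_telescoping_diff:
  fixes p j :: real
  assumes "p > 1" "j > 0"
  shows "(j + 1) powr (-p) \<le> (j powr (1 - p) - (j + 1) powr (1 - p)) / (p - 1)"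
proof -
  have "((\<lambda>x. x powr (1 - p)) has_real_derivative (1 - p) * x powr (1 - p - 1)) (at x)"
    if "j \<le> x" for x
    using assms that by (intro has_real_derivative_powr) auto
  then obtain z where z: "j < z" "z < j + 1"
    "(j + 1) powr (1 - p) - j powr (1 - p) = (j + 1 - j) * ((1 - p) * z powr (1 - p - 1))"
    using MVT2[of j "j + 1" "\<lambda>x. x powr (1 - p)" "\<lambda>x. (1 - p) * x powr (1 - p - 1)"] by auto
  have "(j + 1) powr (-p) \<le> z powr (-p)"
    using z assms by (intro powr_mono2') auto
  moreover have "j powr (1 - p) - (j + 1) powr (1 - p) = (p - 1) * z powr (-p)"
    using z(3) by (simp add: algebra_simps)
  ultimately show ?thesis
    using assms by (simp add: pos_le_divide_eq mult.commute)
qed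

lemma powr_tail_sum:
  fixes p :: real and n :: nat
  assumes "p > 1" "n \<ge> 1"
  shows "summable (\<lambda>i. real (i + n) powr (-p))"
    and "(\<Sum>i. real (i + n) powr (-p)) \<le> p / (p - 1) * real n powr (1 - p)"
proof -
  define a where "a i = real (i + n) powr (1 - p) / (p - 1)" for i
  have "(\<lambda>i. real (i + n) powr (1 - p)) \<longlonglongrightarrow> 0"
    using assms by (intro tendsto_neg_powr filterlim_compose[OF filterlim_real_sequentially
          filterlim_add_const_nat_at_top]) auto
  then have "a \<longlonglongrightarrow> 0"
    unfolding a_def using tendsto_divide_zero by blast
  then have telescope: "(\<lambda>i. a i - a (Suc i)) sums a 0"
    using telescope_sums' by fastforce
  have le: "real (Suc i + n) powr (-p) \<le> a i - a (Suc i)" for i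
    using powr_neg_le_telescoping_diff[OF assms(1), of "real (i + n)"] assms(2)
    by (simp add: a_def diff_divide_distrib add_ac)
  have tail: "summable (\<lambda>i. real (Suc i + n) powr (-p))"
    by (rule summable_comparison_test'[OF sums_summable[OF telescope]]) (use le in auto)
  then show summable: "summable (\<lambda>i. real (i + n) powr (-p))"
    by (subst summable_Suc_iff[symmetric])
  have "(\<Sum>i. real (i + n) powr (-p)) = real n powr (-p) + (\<Sum>i. real (Suc i + n) powr (-p))"
    using suminf_split_head[OF summable] by simp
  moreover have "(\<Sum>i. real (Suc i + n) powr (-p)) \<le> a 0"
    using suminf_le[OF le tail sums_summable[OF telescope]] telescope by (simp add: sums_iff)
  moreover have "real n powr (-p) \<le> real n powr (1 - p)"
    using assms by (intro powr_mono) auto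
  moreover have "real n powr (1 - p) + a 0 = p / (p - 1) * real n powr (1 - p)"
    using assms by (simp add: a_def field_simps)
  ultimately show "(\<Sum>i. real (i + n) powr (-p)) \<le> p / (p - 1) * real n powr (1 - p)"
    by linarith
qed

(* The smallness hypothesis of clamped_sum_nonpos_le_exp for the Chernoff rate
   lambda = a ln k / (beta k), summands bounded below by -beta k, and sigma = 1 + 2a. *)
lemma eventually_bernstein_condition:
  fixes a \<beta> U C \<delta> :: real
  assumes a: "0 < a" "a \<le> 1 / 2" and "0 < \<beta>" "0 \<le> U" "0 \<le> C" "0 < \<delta>"
  shows "\<forall>\<^sub>F k in sequentially.
    a * ln (real k) / (\<beta> * real k) * exp (a * ln (real k)) * (\<beta> * real k + U) powr (1 - 2 * a) * C \<le> \<delta>"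
proof -
  define D where "D = a / \<beta> * (\<beta> + U) powr (1 - 2 * a) * C"
  have "(\<lambda>k. D * (ln (real k) / real k powr a)) \<longlonglongrightarrow> D * 0"
    by (intro tendsto_mult tendsto_const lim_ln_over_power a(1))
  then have "\<forall>\<^sub>F k in sequentially. D * (ln (real k) / real k powr a) < \<delta>"
    using assms by (intro order_tendstoD) auto
  with eventually_ge_at_top[of 1] show ?thesis
  proof eventually_elim
    case (elim k)
    then have k: "real k \<ge> 1" by simp
    have "(\<beta> * real k + U) powr (1 - 2 * a) \<le> ((\<beta> + U) * real k) powr (1 - 2 * a)"
      using assms k mult_left_mono[OF k, of U] by (intro powr_mono2) (auto simp: algebra_simps)
    also have "\<dots> = (\<beta> + U) powr (1 - 2 * a) * real k powr (1 - 2 * a)"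
      using assms by (simp add: powr_mult)
    finally have power_le: "(\<beta> * real k + U) powr (1 - 2 * a)
        \<le> (\<beta> + U) powr (1 - 2 * a) * real k powr (1 - 2 * a)" .
    have k_powers: "real k powr a * real k powr (1 - 2 * a) = real k / real k powr a"
    proof -
      have "real k powr a * real k powr (1 - 2 * a) = real k powr (1 - a)"
        by (simp add: powr_add[symmetric])
      then show ?thesis using k by (simp add: powr_diff)
    qed
    have "a * ln (real k) / (\<beta> * real k) * exp (a * ln (real k)) * (\<beta> * real k + U) powr (1 - 2 * a) * C
        = a * ln (real k) / (\<beta> * real k) * real k powr a * (\<beta> * real k + U) powr (1 - 2 * a) * C"
      using k by (simp add: powr_def)
    also have "\<dots> \<le> a * ln (real k) / (\<beta> * real k) * real k powr a
        * ((\<beta> + U) powr (1 - 2 * a) * real k powr (1 - 2 * a)) * C"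
      using assms k by (intro mult_right_mono mult_left_mono power_le) auto
    also have "\<dots> = a * ln (real k) / (\<beta> * real k) * (real k powr a * real k powr (1 - 2 * a))
        * (\<beta> + U) powr (1 - 2 * a) * C"
      by (simp only: mult_ac)
    also have "\<dots> = D * (ln (real k) / real k powr a)"
      unfolding k_powers D_def using k assms by (simp add: field_simps)
    finally show ?case using elim by linarith
  qed
qed

lemma (in finite_measure) measure_UN_le_suminf:
  assumes "range A \<subseteq> sets M" "\<And>j. measure M (A j) \<le> b j" "summable b"
  shows "measure M (\<Union>j. A j) \<le> (\<Sum>j. b j)"
proof -
  have summable: "summable (\<lambda>j. measure M (A j))"
    by (rule summable_comparison_test'[OF assms(3)]) (use assms(2) in auto)
  have "measure M (\<Union>j. A j) \<le> (\<Sum>j. measure M (A j))"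
    by (rule finite_measure_subadditive_countably[OF assms(1) summable])
  also have "\<dots> \<le> (\<Sum>j. b j)"
    by (rule suminf_le[OF assms(2) summable assms(3)])
  finally show ?thesis .
qed

lemma (in finite_measure) measure_UN_tail_bigo_powr:
  fixes E :: "nat \<Rightarrow> nat \<Rightarrow> 'a set" and p :: real
  assumes sets: "\<And>n k. E n k \<in> sets M"
    and bound: "\<And>n k. K \<le> n \<Longrightarrow> n \<le> k \<Longrightarrow> measure M (E n k) \<le> real k powr - p"
    and p: "1 < p"
  shows "(\<lambda>n. measure M (\<Union>k\<in>{n..}. E n k)) \<in> O(\<lambda>n. real n powr (1 - p))"
proof (rule landau_o.bigI[of "p / (p - 1)"])
  show "\<forall>\<^sub>F n in sequentially. norm (measure M (\<Union>k\<in>{n..}. E n k)) \<le> p / (p - 1) * norm (real n powr (1 - p))"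
    using eventually_ge_at_top[of "max 1 K"]
  proof eventually_elim
    case (elim n)
    have "{n..} = range (\<lambda>j. j + n)"
      by (simp add: atLeast_def image_def) (metis le_add_diff_inverse2 le_add2)
    then have "measure M (\<Union>k\<in>{n..}. E n k) = measure M (\<Union>j. E n (j + n))"
      by (simp add: image_image)
    also have "\<dots> \<le> (\<Sum>j. real (j + n) powr - p)"
      using sets bound[of n "_ + n"] elim powr_tail_sum(1)[OF p, of n]
      by (intro measure_UN_le_suminf) auto
    also have "\<dots> \<le> p / (p - 1) * real n powr (1 - p)"
      using powr_tail_sum(2)[OF p, of n] elim by simp
    finally show ?case by simp
  qed
qed (use p in simp)

lemma (in finite_measure) measure_smallo_if_subset_Un:
  assumes "\<forall>\<^sub>F n in F. A n \<subseteq> B n \<union> C n" "\<And>n. B n \<in> sets M" "\<And>n. C n \<in> sets M"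
    and "(\<lambda>n. measure M (B n)) \<in> o[F](f)" "(\<lambda>n. measure M (C n)) \<in> o[F](f)"
  shows "(\<lambda>n. measure M (A n)) \<in> o[F](f)"
proof (rule landau_o.big_small_trans)
  show "(\<lambda>n. measure M (A n)) \<in> O[F](\<lambda>n. measure M (B n) + measure M (C n))"
  proof (rule landau_o.big_mono, use assms(1) in eventually_elim)
    case (elim n)
    then have "measure M (A n) \<le> measure M (B n \<union> C n)"
      using assms(2,3) by (intro finite_measure_mono) auto
    also have "\<dots> \<le> measure M (B n) + measure M (C n)"
      using assms(2,3) by (rule measure_Un_le)
    finally show ?case by simp
  qed
  show "(\<lambda>n. measure M (B n) + measure M (C n)) \<in> o[F](f)"
    using assms(4,5) by (rule sum_in_smallo)
qed

lemma smallo_if_le_vanishing_multiple: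
  fixes f g c :: "'a \<Rightarrow> real"
  assumes "\<forall>\<^sub>F x in F. norm (f x) \<le> c x * norm (g x)" "(c \<longlongrightarrow> 0) F"
  shows "f \<in> o[F](g)"
proof (rule landau_o.smallI)
  fix e :: real assume "0 < e"
  with assms(2) have "\<forall>\<^sub>F x in F. c x < e" by (rule order_tendstoD)
  with assms(1) show "\<forall>\<^sub>F x in F. norm (f x) \<le> e * norm (g x)"
    by eventually_elim (meson less_imp_le mult_right_mono norm_ge_zero order_trans)
qed

lemma exists_truncation_level:
  fixes g :: "'a \<Rightarrow> real"
  assumes "integrable M g" "\<delta> < (\<integral>y. g y \<partial>M)"
  obtains U where "0 \<le> U" "\<delta> \<le> (\<integral>y. min (g y) U \<partial>M)"
proof -
  have "(\<lambda>N. \<integral>y. min (g y) (real N) \<partial>M) \<longlonglongrightarrow> (\<integral>y. g y \<partial>M)"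
  proof (rule integral_dominated_convergence[where w="\<lambda>y. \<bar>g y\<bar>"])
    show "AE y in M. (\<lambda>N. min (g y) (real N)) \<longlonglongrightarrow> g y"
    proof (rule AE_I2, rule tendsto_eventually)
      fix y
      obtain N :: nat where "g y \<le> real N" using real_arch_simple by blast
      then show "\<forall>\<^sub>F N in sequentially. min (g y) (real N) = g y"
        unfolding eventually_sequentially by (intro exI[of _ N]) auto
    qed
  qed (use assms in auto)
  then have "\<forall>\<^sub>F N in sequentially. \<delta> < (\<integral>y. min (g y) (real N) \<partial>M)"
    using assms(2) by (rule order_tendstoD)
  then obtain N :: nat where "\<delta> < (\<integral>y. min (g y) (real N) \<partial>M)"
    by (auto dest: eventually_happens)
  then show thesis by (intro that[of "real N"]) auto
qed

lemma tendsto_integral_exceedance_0: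
  fixes f g :: "'a \<Rightarrow> real"
  assumes "integrable M f" "g \<in> borel_measurable M" "0 < \<epsilon>"
  shows "(\<lambda>n. \<integral>y. (if \<epsilon> * real n < g y then f y else 0) \<partial>M) \<longlonglongrightarrow> 0"
proof -
  have "(\<lambda>n. \<integral>y. (if \<epsilon> * real n < g y then f y else 0) \<partial>M) \<longlonglongrightarrow> (\<integral>y. 0 \<partial>M)"
  proof (rule integral_dominated_convergence[where w="\<lambda>y. \<bar>f y\<bar>"])
    show "AE y in M. (\<lambda>n. if \<epsilon> * real n < g y then f y else 0) \<longlonglongrightarrow> 0"
    proof (rule AE_I2, rule tendsto_eventually)
      fix y
      have "\<forall>\<^sub>F n in sequentially. g y / \<epsilon> \<le> real n"
        by (rule filterlim_real_sequentially[unfolded filterlim_at_top, rule_format])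
      then show "\<forall>\<^sub>F n in sequentially. (if \<epsilon> * real n < g y then f y else 0) = 0"
        by eventually_elim (use assms(3) in \<open>auto simp: field_simps\<close>)
    qed
  qed (use assms in auto)
  then show ?thesis by simp
qed

lemma (in finite_measure) integrable_abs_powr_mono:
  fixes g :: "'a \<Rightarrow> real"
  assumes "g \<in> borel_measurable M" "integrable M (\<lambda>y. \<bar>g y\<bar> powr s)" "0 \<le> \<sigma>" "\<sigma> \<le> s"
  shows "integrable M (\<lambda>y. \<bar>g y\<bar> powr \<sigma>)"
proof (rule Bochner_Integration.integrable_bound)
  show "integrable M (\<lambda>y. 1 + \<bar>g y\<bar> powr s)"
    using assms(2) by (intro Bochner_Integration.integrable_add integrable_const)
  have "\<bar>g y\<bar> powr \<sigma> \<le> 1 + \<bar>g y\<bar> powr s" for y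
  proof (cases "\<bar>g y\<bar> \<le> 1")
    case True
    then have "\<bar>g y\<bar> powr \<sigma> \<le> 1 powr \<sigma>" using assms by (intro powr_mono2) auto
    then show ?thesis by (simp add: add_increasing2)
  next
    case False
    then have "\<bar>g y\<bar> powr \<sigma> \<le> \<bar>g y\<bar> powr s" using assms by (intro powr_mono) auto
    then show ?thesis by simp
  qed
  then show "AE y in M. norm (\<bar>g y\<bar> powr \<sigma>) \<le> norm (1 + \<bar>g y\<bar> powr s)"
    by (intro AE_I2) auto
qed (use assms in measurable)

lemma (in prob_space) expectation_exp_neg_le:
  fixes z V :: "'a \<Rightarrow> real" and lam c \<delta> :: real
  assumes z: "z \<in> borel_measurable M" "integrable M z" and V: "integrable M V"
    and lam: "0 \<le> lam" and c: "\<And>y. - lam * z y \<le> c" "0 \<le> c"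
    and z_sq: "\<And>y. (z y)\<^sup>2 \<le> V y"
    and mean: "\<delta> \<le> expectation z" and small: "lam * exp c * expectation V \<le> \<delta>"
  shows "expectation (\<lambda>y. exp (- lam * z y)) \<le> exp (- lam * \<delta> / 2)"
proof -
  have pointwise: "exp (- lam * z y) \<le> 1 - lam * z y + lam\<^sup>2 * exp c / 2 * V y" for y
  proof -
    have "(- lam * z y)\<^sup>2 * exp c / 2 \<le> lam\<^sup>2 * exp c / 2 * V y"
      using mult_left_mono[OF z_sq[of y], of "lam\<^sup>2 * exp c"]
      by (simp add: power_mult_distrib mult_ac)
    then show ?thesis
      using exp_le_1_plus_quadratic[OF c(1)[of y] c(2)] by linarith
  qed
  have "integrable M (\<lambda>y. exp (- lam * z y))"
    by (rule integrable_const_bound[where B="exp c"]) (use z c in auto)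
  then have "expectation (\<lambda>y. exp (- lam * z y))
      \<le> expectation (\<lambda>y. 1 - lam * z y + lam\<^sup>2 * exp c / 2 * V y)"
    by (intro integral_mono pointwise) (use z V in auto)
  also have "\<dots> = 1 - lam * expectation z + lam * (lam * exp c * expectation V) / 2"
    using z V by (simp add: prob_space power2_eq_square)
  also have "\<dots> \<le> 1 - lam * \<delta> + lam * \<delta> / 2"
    using mult_left_mono[OF mean lam] mult_left_mono[OF small lam] by linarith
  also have "\<dots> \<le> exp (- lam * \<delta> / 2)"
    using exp_ge_add_one_self[of "- lam * \<delta> / 2"] by (simp add: mult.commute)
  finally show ?thesis .
qed

section \<open>Partial sums of i.i.d. sequences\<close>

locale iid_sequence = P: prob_space P for P :: "'w measure" +
  fixes Q :: "'s measure" and X :: "nat \<Rightarrow> 'w \<Rightarrow> 's"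
  assumes measurable_X [measurable]: "\<And>i. X i \<in> measurable P Q"
    and distr_X: "\<And>i. distr P Q (X i) = Q"
    and indep_X: "P.indep_vars (\<lambda>_. Q) X UNIV"
begin

sublocale Q: prob_space Q
  using P.prob_space_distr[OF measurable_X[of 0]] distr_X[of 0] by simp

lemma integral_comp_X:
  fixes f :: "'s \<Rightarrow> real"
  assumes "f \<in> borel_measurable Q"
  shows "(\<integral>\<omega>. f (X i \<omega>) \<partial>P) = (\<integral>y. f y \<partial>Q)"
  using integral_distr[OF measurable_X assms] distr_X by simp

lemma measure_comp_X:
  assumes "A \<in> sets Q"
  shows "measure P {\<omega> \<in> space P. X i \<omega> \<in> A} = measure Q A"
proof -
  have "{\<omega> \<in> space P. X i \<omega> \<in> A} = X i -` A \<inter> space P" by auto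
  then show ?thesis
    using measure_distr[OF measurable_X assms] distr_X by simp
qed

lemma integrable_if_nn_integral_comp_X_finite:
  fixes f :: "'s \<Rightarrow> real"
  assumes "f \<in> borel_measurable Q" "\<And>y. 0 \<le> f y"
    and "(\<integral>\<^sup>+\<omega>. ennreal (f (X 0 \<omega>)) \<partial>P) < \<infinity>"
  shows "integrable Q f"
proof (rule integrableI_bounded)
  have "(\<integral>\<^sup>+y. ennreal (norm (f y)) \<partial>Q) = (\<integral>\<^sup>+y. ennreal (f y) \<partial>distr P Q (X 0))"
    using assms(2) distr_X[of 0] by simp
  also have "\<dots> = (\<integral>\<^sup>+\<omega>. ennreal (f (X 0 \<omega>)) \<partial>P)"
    using assms(1) by (intro nn_integral_distr) auto
  finally show "(\<integral>\<^sup>+y. ennreal (norm (f y)) \<partial>Q) < \<infinity>"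
    using assms(3) by simp
qed (rule assms(1))

lemma integral_prod_comp_X:
  fixes \<phi> :: "nat \<Rightarrow> 's \<Rightarrow> real"
  assumes meas: "\<And>i. \<phi> i \<in> borel_measurable Q" and bounded: "\<And>i y. \<bar>\<phi> i y\<bar> \<le> B i"
  shows "(\<integral>\<omega>. (\<Prod>i<k. \<phi> i (X i \<omega>)) \<partial>P) = (\<Prod>i<k. \<integral>y. \<phi> i y \<partial>Q)"
proof -
  have indep: "P.indep_vars (\<lambda>_. borel) (\<lambda>i \<omega>. \<phi> i (X i \<omega>)) {..<k}"
    by (rule P.indep_vars_compose2[OF P.indep_vars_subset[OF indep_X]]) (auto intro: meas)
  have "integrable P (\<lambda>\<omega>. \<phi> i (X i \<omega>))" for i
    by (rule P.integrable_const_bound[where B="B i"]) (use bounded meas in auto)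
  then have "(\<integral>\<omega>. (\<Prod>i<k. \<phi> i (X i \<omega>)) \<partial>P) = (\<Prod>i<k. \<integral>\<omega>. \<phi> i (X i \<omega>) \<partial>P)"
    by (intro P.indep_vars_lebesgue_integral[OF _ indep]) auto
  also have "\<dots> = (\<Prod>i<k. \<integral>y. \<phi> i y \<partial>Q)"
    by (intro prod.cong refl integral_comp_X meas)
  finally show ?thesis .
qed

lemma prob_sum_nonpos_le_prod_expectation:
  fixes z :: "nat \<Rightarrow> 's \<Rightarrow> real" and lam :: real
  assumes meas: "\<And>i. z i \<in> borel_measurable Q" and lower: "\<And>i y. - L i \<le> z i y"
    and lam: "0 \<le> lam"
  shows "measure P {\<omega> \<in> space P. (\<Sum>i<k. z i (X i \<omega>)) \<le> 0}
          \<le> (\<Prod>i<k. \<integral>y. exp (- lam * z i y) \<partial>Q)"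
proof -
  have bounded: "\<bar>exp (- lam * z i y)\<bar> \<le> exp (lam * L i)" for i y
    using mult_left_mono[OF lower[of i y] lam] by simp
  have meas_prod: "(\<lambda>\<omega>. \<Prod>i<k. exp (- lam * z i (X i \<omega>))) \<in> borel_measurable P"
    using meas by measurable
  have "{\<omega> \<in> space P. (\<Sum>i<k. z i (X i \<omega>)) \<le> 0}
      \<subseteq> {\<omega> \<in> space P. 1 \<le> (\<Prod>i<k. exp (- lam * z i (X i \<omega>)))}"
  proof safe
    fix \<omega> assume "(\<Sum>i<k. z i (X i \<omega>)) \<le> 0"
    then have "0 \<le> (\<Sum>i<k. - lam * z i (X i \<omega>))"
      using lam by (simp add: sum_negf sum_distrib_left[symmetric] mult_nonneg_nonpos)
    then show "1 \<le> (\<Prod>i<k. exp (- lam * z i (X i \<omega>)))"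
      by (simp add: exp_sum[symmetric])
  qed
  then have "measure P {\<omega> \<in> space P. (\<Sum>i<k. z i (X i \<omega>)) \<le> 0}
      \<le> measure P {\<omega> \<in> space P. 1 \<le> (\<Prod>i<k. exp (- lam * z i (X i \<omega>)))}"
    by (intro P.finite_measure_mono) (use meas_prod in measurable)
  also have "\<dots> \<le> (\<integral>\<omega>. (\<Prod>i<k. exp (- lam * z i (X i \<omega>))) \<partial>P) / 1"
  proof (rule integral_Markov_inequality_measure[where A="space P"])
    show "integrable P (\<lambda>\<omega>. \<Prod>i<k. exp (- lam * z i (X i \<omega>)))"
      by (rule P.integrable_const_bound[where B="\<Prod>i<k. exp (lam * L i)"])
         (use meas_prod bounded in \<open>auto simp: abs_prod intro!: AE_I2 prod_mono\<close>)
  qed (auto simp: prod_nonneg)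
  also have "\<dots> = (\<Prod>i<k. \<integral>y. exp (- lam * z i y) \<partial>Q)"
    using integral_prod_comp_X[of "\<lambda>i y. exp (- lam * z i y)", OF _ bounded] meas by simp
  finally show ?thesis .
qed

lemma clamped_sum_nonpos_le_exp:
  fixes g :: "'s \<Rightarrow> real" and lo :: "nat \<Rightarrow> real"
  assumes g: "g \<in> borel_measurable Q" "integrable Q g"
    and moment: "integrable Q (\<lambda>y. \<bar>g y\<bar> powr \<sigma>)" "0 \<le> \<sigma>" "\<sigma> \<le> 2"
    and U: "0 \<le> U" "\<delta> \<le> (\<integral>y. min (g y) U \<partial>Q)"
    and lo: "\<And>i. 0 \<le> lo i" "\<And>i. i < k \<Longrightarrow> lo i \<le> b"
    and lam: "0 \<le> lam"
    and small: "lam * exp (lam * b) * (b + U) powr (2 - \<sigma>) * (\<integral>y. \<bar>g y\<bar> powr \<sigma> \<partial>Q) \<le> \<delta>"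
  shows "measure P {\<omega> \<in> space P. (\<Sum>i<k. min (max (g (X i \<omega>)) (- lo i)) U) \<le> 0}
    \<le> exp (- real k * lam * \<delta> / 2)"
proof -
  define z where "z i y = min (max (g y) (- lo i)) U" for i y
  have z_meas: "z i \<in> borel_measurable Q" for i
    unfolding z_def using g(1) by measurable
  have "measure P {\<omega> \<in> space P. (\<Sum>i<k. z i (X i \<omega>)) \<le> 0} \<le> (\<Prod>i<k. \<integral>y. exp (- lam * z i y) \<partial>Q)"
  proof (rule prob_sum_nonpos_le_prod_expectation[OF z_meas _ lam])
    show "- lo i \<le> z i y" for i y
      using U(1) lo(1)[of i] by (simp add: z_def)
  qed
  also have "\<dots> \<le> (\<Prod>i<k. exp (- lam * \<delta> / 2))"
  proof (intro prod_mono conjI)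
    fix i assume i: "i \<in> {..<k}"
    show "0 \<le> (\<integral>y. exp (- lam * z i y) \<partial>Q)" by simp
    have z_bounds: "- b \<le> z i y" "\<bar>z i y\<bar> \<le> \<bar>g y\<bar>" "\<bar>z i y\<bar> \<le> b + U" "min (g y) U \<le> z i y" for y
      using lo[of i] i U(1) by (auto simp: z_def)
    have z_int: "integrable Q (z i)"
      by (rule Bochner_Integration.integrable_bound[OF integrable_abs[OF g(2)] z_meas])
         (use z_bounds in auto)
    show "(\<integral>y. exp (- lam * z i y) \<partial>Q) \<le> exp (- lam * \<delta> / 2)"
    proof (rule Q.expectation_exp_neg_le[OF z_meas z_int _ lam,
          where V="\<lambda>y. (b + U) powr (2 - \<sigma>) * \<bar>g y\<bar> powr \<sigma>" and c="lam * b"])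
      show "integrable Q (\<lambda>y. (b + U) powr (2 - \<sigma>) * \<bar>g y\<bar> powr \<sigma>)"
        using moment(1) by simp
      show "- lam * z i y \<le> lam * b" for y
        using mult_left_mono[OF z_bounds(1)[of y] lam] by simp
      show "0 \<le> lam * b"
        using lam lo(1)[of i] lo(2)[of i] i by simp
      show "(z i y)\<^sup>2 \<le> (b + U) powr (2 - \<sigma>) * \<bar>g y\<bar> powr \<sigma>" for y
        by (rule square_le_powr_interpolation) (use z_bounds moment in auto)
      have "(\<integral>y. min (g y) U \<partial>Q) \<le> (\<integral>y. z i y \<partial>Q)"
        by (rule integral_mono[OF _ z_int]) (use g z_bounds in auto)
      then show "\<delta> \<le> (\<integral>y. z i y \<partial>Q)" using U(2) by linarith
      show "lam * exp (lam * b) * (\<integral>y. (b + U) powr (2 - \<sigma>) * \<bar>g y\<bar> powr \<sigma> \<partial>Q) \<le> \<delta>"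
        using small by (simp add: mult.assoc)
    qed
  qed
  also have "\<dots> = exp (- real k * lam * \<delta> / 2)"
    by (simp add: exp_of_nat_mult[symmetric])
  finally show ?thesis by (simp add: z_def)
qed

lemma eventually_clamped_sum_nonpos_le_powr:
  fixes g :: "'s \<Rightarrow> real" and a \<beta> \<delta> U :: real
  assumes g: "g \<in> borel_measurable Q" "integrable Q g"
    and moment: "integrable Q (\<lambda>y. \<bar>g y\<bar> powr (1 + 2 * a))" and a: "0 < a" "a \<le> 1 / 2"
    and U: "0 \<le> U" "\<delta> \<le> (\<integral>y. min (g y) U \<partial>Q)" and \<delta>: "0 < \<delta>" and \<beta>: "0 < \<beta>"
  shows "\<forall>\<^sub>F k in sequentially. \<forall>lo. (\<forall>i. 0 \<le> lo i) \<and> (\<forall>i<k. lo i \<le> \<beta> * real k) \<longrightarrow>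
    measure P {\<omega> \<in> space P. (\<Sum>i<k. min (max (g (X i \<omega>)) (- lo i)) U) \<le> 0}
      \<le> real k powr - (a * \<delta> / (2 * \<beta>))"
proof -
  have "0 \<le> (\<integral>y. \<bar>g y\<bar> powr (1 + 2 * a) \<partial>Q)" by simp
  from eventually_bernstein_condition[OF a \<beta> U(1) this \<delta>] eventually_ge_at_top[of 1]
  show ?thesis
  proof eventually_elim
    case (elim k)
    define lam where "lam = a * ln (real k) / (\<beta> * real k)"
    have lam_b: "lam * (\<beta> * real k) = a * ln (real k)"
      using elim \<beta> by (simp add: lam_def)
    show ?case
    proof safe
      fix lo :: "nat \<Rightarrow> real"
      assume lo: "\<forall>i. 0 \<le> lo i" "\<forall>i<k. lo i \<le> \<beta> * real k"
      have "measure P {\<omega> \<in> space P. (\<Sum>i<k. min (max (g (X i \<omega>)) (- lo i)) U) \<le> 0}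
          \<le> exp (- real k * lam * \<delta> / 2)"
      proof (rule clamped_sum_nonpos_le_exp[OF g moment _ _ U])
        show "0 \<le> lam" using a \<beta> elim by (simp add: lam_def)
        show "lam * exp (lam * (\<beta> * real k)) * (\<beta> * real k + U) powr (2 - (1 + 2 * a))
            * (\<integral>y. \<bar>g y\<bar> powr (1 + 2 * a) \<partial>Q) \<le> \<delta>"
          using elim(1) unfolding lam_b by (simp add: lam_def)
      qed (use lo a in auto)
      also have "exp (- real k * lam * \<delta> / 2) = real k powr - (a * \<delta> / (2 * \<beta>))"
        using elim(2) \<beta> by (simp add: lam_def powr_def field_simps)
      finally show "measure P {\<omega> \<in> space P. (\<Sum>i<k. min (max (g (X i \<omega>)) (- lo i)) U) \<le> 0}
          \<le> real k powr - (a * \<delta> / (2 * \<beta>))" .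
    qed
  qed
qed

lemma prob_comp_X_below_le_tail_moment:
  fixes g :: "'s \<Rightarrow> real"
  assumes [measurable]: "g \<in> borel_measurable Q" and moment: "integrable Q (\<lambda>y. \<bar>g y\<bar> powr s)"
    and "0 \<le> s" "0 < c" "b \<le> c"
  shows "measure P {\<omega> \<in> space P. g (X i \<omega>) < - c}
    \<le> (\<integral>y. (if b < \<bar>g y\<bar> then \<bar>g y\<bar> powr s else 0) \<partial>Q) / c powr s"
proof -
  define W where "W y = (if b < \<bar>g y\<bar> then \<bar>g y\<bar> powr s else 0)" for y
  have [measurable]: "W \<in> borel_measurable Q" unfolding W_def by measurable
  have W_int: "integrable Q W"
    by (rule Bochner_Integration.integrable_bound[OF moment]) (auto simp: W_def)
  have "{\<omega> \<in> space P. g (X i \<omega>) < - c} = {\<omega> \<in> space P. X i \<omega> \<in> {y \<in> space Q. g y < - c}}"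
    using measurable_space[OF measurable_X[of i]] by auto
  then have "measure P {\<omega> \<in> space P. g (X i \<omega>) < - c} = measure Q {y \<in> space Q. g y < - c}"
    by (simp only:) (rule measure_comp_X, measurable)
  also have "\<dots> \<le> measure Q {y \<in> space Q. c powr s \<le> W y}"
    using assms by (intro Q.finite_measure_mono) (auto simp: W_def intro!: powr_mono2)
  also have "\<dots> \<le> (\<integral>y. W y \<partial>Q) / c powr s"
    using W_int assms by (intro integral_Markov_inequality_measure[where A="space Q"]) (auto simp: W_def[abs_def])
  finally show ?thesis by (simp add: W_def)
qed

lemma lower_exceedances_smallo:
  fixes g :: "'s \<Rightarrow> real"
  assumes g [measurable]: "g \<in> borel_measurable Q"
    and moment: "integrable Q (\<lambda>y. \<bar>g y\<bar> powr s)" and s: "1 < s" and \<epsilon>: "0 < \<epsilon>"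
  shows "(\<lambda>n. measure P (\<Union>i. {\<omega> \<in> space P. g (X i \<omega>) < - (\<epsilon> * real (i + n))}))
    \<in> o(\<lambda>n. real n powr (1 - s))"
proof (rule smallo_if_le_vanishing_multiple)
  define R where "R n = (\<integral>y. (if \<epsilon> * real n < \<bar>g y\<bar> then \<bar>g y\<bar> powr s else 0) \<partial>Q)" for n
  have "R \<longlonglongrightarrow> 0"
    unfolding R_def by (rule tendsto_integral_exceedance_0[OF moment _ \<epsilon>]) simp
  then show "(\<lambda>n. s / (s - 1) / \<epsilon> powr s * R n) \<longlonglongrightarrow> 0"
    by (intro tendsto_mult_right_zero)
  show "\<forall>\<^sub>F n in sequentially. norm (measure P (\<Union>i. {\<omega> \<in> space P. g (X i \<omega>) < - (\<epsilon> * real (i + n))}))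
      \<le> s / (s - 1) / \<epsilon> powr s * R n * norm (real n powr (1 - s))"
    using eventually_ge_at_top[of 1]
  proof eventually_elim
    case (elim n)
    have exceedance: "measure P {\<omega> \<in> space P. g (X i \<omega>) < - (\<epsilon> * real (i + n))}
        \<le> R n / \<epsilon> powr s * real (i + n) powr (-s)" for i
    proof -
      have "measure P {\<omega> \<in> space P. g (X i \<omega>) < - (\<epsilon> * real (i + n))} \<le> R n / (\<epsilon> * real (i + n)) powr s"
        unfolding R_def using \<epsilon> s elim
        by (intro prob_comp_X_below_le_tail_moment[OF g moment]) auto
      also have "\<dots> = R n / \<epsilon> powr s * real (i + n) powr (-s)"
        using \<epsilon> elim by (simp add: powr_mult powr_minus divide_inverse)
      finally show ?thesis .
    qed
    have "0 \<le> R n / \<epsilon> powr s"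
      unfolding R_def by (auto intro!: integral_nonneg_AE divide_nonneg_nonneg)
    then have "measure P (\<Union>i. {\<omega> \<in> space P. g (X i \<omega>) < - (\<epsilon> * real (i + n))})
        \<le> (\<Sum>i. R n / \<epsilon> powr s * real (i + n) powr (-s))"
      using powr_tail_sum(1)[OF s elim]
      by (intro P.measure_UN_le_suminf exceedance summable_mult) auto
    also have "\<dots> = R n / \<epsilon> powr s * (\<Sum>i. real (i + n) powr (-s))"
      using powr_tail_sum(1)[OF s elim] by (rule suminf_mult)
    also have "\<dots> \<le> R n / \<epsilon> powr s * (s / (s - 1) * real n powr (1 - s))"
      using powr_tail_sum(2)[OF s elim] \<open>0 \<le> R n / \<epsilon> powr s\<close> by (rule mult_left_mono)
    finally show ?case by (simp add: field_simps)
  qed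
qed

lemma clamped_partial_sums_nonpos_smallo:
  fixes g :: "'s \<Rightarrow> real" and s :: real
  assumes g [measurable]: "g \<in> borel_measurable Q" and g_int: "integrable Q g"
    and mean: "0 < (\<integral>y. g y \<partial>Q)" and moment: "integrable Q (\<lambda>y. \<bar>g y\<bar> powr s)" and s: "1 < s"
  obtains \<epsilon> U where "0 < \<epsilon>"
    "(\<lambda>n. measure P {\<omega> \<in> space P. \<exists>k\<ge>n. (\<Sum>i<k. min (max (g (X i \<omega>)) (- (\<epsilon> * real (i + n)))) U) \<le> 0})
      \<in> o(\<lambda>n. real n powr (1 - s))"
proof -
  define \<delta> where "\<delta> = (\<integral>y. g y \<partial>Q) / 2"
  have \<delta>: "0 < \<delta>" "\<delta> < (\<integral>y. g y \<partial>Q)" using mean by (auto simp: \<delta>_def)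
  obtain U where U: "0 \<le> U" "\<delta> \<le> (\<integral>y. min (g y) U \<partial>Q)"
    using exists_truncation_level[OF g_int \<delta>(2)] by blast
  define a where "a = (min s 2 - 1) / 2"
  have a: "0 < a" "a \<le> 1 / 2" "1 + 2 * a \<le> s" using s by (auto simp: a_def field_simps)
  have moment': "integrable Q (\<lambda>y. \<bar>g y\<bar> powr (1 + 2 * a))"
    by (rule Q.integrable_abs_powr_mono[OF g moment]) (use a in auto)
  define \<beta> where "\<beta> = a * \<delta> / (2 * (s + 1))"
  define \<epsilon> where "\<epsilon> = \<beta> / 2"
  have \<beta>: "0 < \<beta>" "0 < \<epsilon>" "a * \<delta> / (2 * \<beta>) = s + 1"
    using a \<delta> s by (auto simp: \<beta>_def \<epsilon>_def)
  define E where "E n k = {\<omega> \<in> space P. (\<Sum>i<k. min (max (g (X i \<omega>)) (- (\<epsilon> * real (i + n)))) U) \<le> 0}"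
    for n k
  obtain K where K: "\<And>k lo. K \<le> k \<Longrightarrow> (\<forall>i. 0 \<le> lo i) \<and> (\<forall>i<k. lo i \<le> \<beta> * real k) \<Longrightarrow>
      measure P {\<omega> \<in> space P. (\<Sum>i<k. min (max (g (X i \<omega>)) (- lo i)) U) \<le> 0}
        \<le> real k powr - (a * \<delta> / (2 * \<beta>))"
    using eventually_clamped_sum_nonpos_le_powr[OF g g_int moment' a(1,2) U \<delta>(1) \<beta>(1)]
    unfolding eventually_sequentially by blast
  have "(\<lambda>n. measure P (\<Union>k\<in>{n..}. E n k)) \<in> O(\<lambda>n. real n powr (1 - (s + 1)))"
  proof (rule P.measure_UN_tail_bigo_powr)
    show "E n k \<in> sets P" for n k unfolding E_def by measurable
    show "measure P (E n k) \<le> real k powr - (s + 1)" if "K \<le> n" "n \<le> k" for n k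
      unfolding E_def \<beta>(3)[symmetric] using that \<beta> by (intro K) (auto simp: \<epsilon>_def)
  qed (use s in simp)
  also have "(\<lambda>n. real n powr (1 - (s + 1))) \<in> o(\<lambda>n. real n powr (1 - s))"
    using s by (simp add: powr_smallo_iff filterlim_real_sequentially)
  finally have "(\<lambda>n. measure P (\<Union>k\<in>{n..}. E n k)) \<in> o(\<lambda>n. real n powr (1 - s))" .
  moreover have "(\<Union>k\<in>{n..}. E n k)
      = {\<omega> \<in> space P. \<exists>k\<ge>n. (\<Sum>i<k. min (max (g (X i \<omega>)) (- (\<epsilon> * real (i + n)))) U) \<le> 0}" for n
    unfolding E_def by auto
  ultimately show thesis
    using that[OF \<beta>(2)] by simp
qed

lemma partial_sums_nonpos_smallo:
  fixes g :: "'s \<Rightarrow> real" and s :: real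
  assumes g [measurable]: "g \<in> borel_measurable Q" and g_int: "integrable Q g"
    and mean: "0 < (\<integral>y. g y \<partial>Q)" and moment: "integrable Q (\<lambda>y. \<bar>g y\<bar> powr s)" and s: "1 < s"
  shows "(\<lambda>n. measure P {\<omega> \<in> space P. \<exists>k\<ge>n. (\<Sum>i<k. g (X i \<omega>)) \<le> 0})
    \<in> o(\<lambda>n. real n powr (1 - s))"
proof -
  obtain \<epsilon> U where \<epsilon>: "0 < \<epsilon>" and clamped:
    "(\<lambda>n. measure P {\<omega> \<in> space P. \<exists>k\<ge>n. (\<Sum>i<k. min (max (g (X i \<omega>)) (- (\<epsilon> * real (i + n)))) U) \<le> 0})
      \<in> o(\<lambda>n. real n powr (1 - s))"
    using clamped_partial_sums_nonpos_smallo[OF g g_int mean moment s] by blast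
  show ?thesis
  proof (rule P.measure_smallo_if_subset_Un[OF _ _ _ lower_exceedances_smallo[OF g moment s \<epsilon>] clamped])
    show "\<forall>\<^sub>F n in sequentially. {\<omega> \<in> space P. \<exists>k\<ge>n. (\<Sum>i<k. g (X i \<omega>)) \<le> 0}
      \<subseteq> (\<Union>i. {\<omega> \<in> space P. g (X i \<omega>) < - (\<epsilon> * real (i + n))})
        \<union> {\<omega> \<in> space P. \<exists>k\<ge>n. (\<Sum>i<k. min (max (g (X i \<omega>)) (- (\<epsilon> * real (i + n)))) U) \<le> 0}"
    proof (intro always_eventually allI subsetI)
      fix n \<omega> assume "\<omega> \<in> {\<omega> \<in> space P. \<exists>k\<ge>n. (\<Sum>i<k. g (X i \<omega>)) \<le> 0}"
      then obtain k where "\<omega> \<in> space P" "k \<ge> n" "(\<Sum>i<k. g (X i \<omega>)) \<le> 0" by blast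
      moreover have "(\<Sum>i<k. min (max (g (X i \<omega>)) (- (\<epsilon> * real (i + n)))) U) \<le> (\<Sum>i<k. g (X i \<omega>))"
        if "\<forall>i. - (\<epsilon> * real (i + n)) \<le> g (X i \<omega>)"
        using that by (intro sum_mono) auto
      ultimately show "\<omega> \<in> (\<Union>i. {\<omega> \<in> space P. g (X i \<omega>) < - (\<epsilon> * real (i + n))})
        \<union> {\<omega> \<in> space P. \<exists>k\<ge>n. (\<Sum>i<k. min (max (g (X i \<omega>)) (- (\<epsilon> * real (i + n)))) U) \<le> 0}"
        by (force simp: not_less)
    qed
  qed measurable
qed

end

section \<open>The M-estimator\<close>

context
  fixes Q :: "'s measure" and h :: "'s \<Rightarrow> real \<Rightarrow> real"
  assumes measurable_h: "\<And>t. (\<lambda>y. h y t) \<in> borel_measurable Q"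
    and convex_h: "\<And>y. y \<in> space Q \<Longrightarrow> convex_on UNIV (h y)"
    and integrable_rderiv: "\<And>t. integrable Q (\<lambda>y. rderiv (h y) t)"
begin

lemma integrable_convex_increment: "integrable Q (\<lambda>y. h y b - h y a)"
proof (rule Bochner_Integration.integrable_bound)
  show "integrable Q (\<lambda>y. \<bar>b - a\<bar> * (\<bar>rderiv (h y) a\<bar> + \<bar>rderiv (h y) b\<bar>))"
    using integrable_rderiv
    by (intro integrable_mult_right Bochner_Integration.integrable_add integrable_abs)
  show "AE y in Q. norm (h y b - h y a) \<le> norm (\<bar>b - a\<bar> * (\<bar>rderiv (h y) a\<bar> + \<bar>rderiv (h y) b\<bar>))"
    using convex_on_abs_diff_le_rderiv[OF convex_h] by (intro AE_I2) auto
qed (use measurable_h in measurable)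

lemma popM_increment_bounds:
  assumes "a < b"
  shows "(\<integral>y. rderiv (h y) a \<partial>Q) * (b - a) \<le> popM Q h t0 b - popM Q h t0 a"
    and "popM Q h t0 b - popM Q h t0 a \<le> (\<integral>y. rderiv (h y) b \<partial>Q) * (b - a)"
proof -
  have "popM Q h t0 b - popM Q h t0 a = (\<integral>y. (h y b - h y t0) - (h y a - h y t0) \<partial>Q)"
    unfolding popM_def by (intro Bochner_Integration.integral_diff[symmetric] integrable_convex_increment)
  also have "\<dots> = (\<integral>y. h y b - h y a \<partial>Q)" by simp
  finally have increment: "popM Q h t0 b - popM Q h t0 a = (\<integral>y. h y b - h y a \<partial>Q)" .
  show "(\<integral>y. rderiv (h y) a \<partial>Q) * (b - a) \<le> popM Q h t0 b - popM Q h t0 a"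
    unfolding increment integral_mult_left_zero[symmetric]
    by (intro integral_mono integrable_mult_left integrable_rderiv integrable_convex_increment
        convex_on_rderiv_increment_bounds(1)[OF convex_h assms])
  show "popM Q h t0 b - popM Q h t0 a \<le> (\<integral>y. rderiv (h y) b \<partial>Q) * (b - a)"
    unfolding increment integral_mult_left_zero[symmetric]
    by (intro integral_mono integrable_mult_left integrable_rderiv integrable_convex_increment
        convex_on_rderiv_increment_bounds(2)[OF convex_h assms])
qed

lemma integral_rderiv_sign_at_strict_minimizer:
  assumes strict_min: "\<And>t. t \<noteq> m \<Longrightarrow> popM Q h t0 m < popM Q h t0 t" and "0 < r"
  shows "0 < (\<integral>y. rderiv (h y) (m + r) \<partial>Q)" and "(\<integral>y. rderiv (h y) (m - r) \<partial>Q) < 0"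
proof -
  have "0 < popM Q h t0 (m + r) - popM Q h t0 m" using strict_min[of "m + r"] \<open>0 < r\<close> by simp
  also have "\<dots> \<le> (\<integral>y. rderiv (h y) (m + r) \<partial>Q) * r"
    using popM_increment_bounds(2)[of m "m + r"] \<open>0 < r\<close> by simp
  finally show "0 < (\<integral>y. rderiv (h y) (m + r) \<partial>Q)"
    using \<open>0 < r\<close> by (simp add: zero_less_mult_iff)
  have "(\<integral>y. rderiv (h y) (m - r) \<partial>Q) * r \<le> popM Q h t0 m - popM Q h t0 (m - r)"
    using popM_increment_bounds(1)[of "m - r" m] \<open>0 < r\<close> by simp
  also have "\<dots> < 0" using strict_min[of "m - r"] \<open>0 < r\<close> by simp
  finally show "(\<integral>y. rderiv (h y) (m - r) \<partial>Q) < 0"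
    using \<open>0 < r\<close> by (simp add: mult_less_0_iff)
qed

end

lemma empM_minimizer_far_imp_sum_rderiv:
  fixes X :: "nat \<Rightarrow> 'w \<Rightarrow> 's" and h :: "'s \<Rightarrow> real \<Rightarrow> real"
  assumes convex: "\<And>i. i < k \<Longrightarrow> convex_on UNIV (h (X i \<omega>))" and "1 \<le> k"
    and min: "\<And>u. empM X h t0 k \<omega> mh \<le> empM X h t0 k \<omega> u" and far: "r < \<bar>mh - m\<bar>"
  shows "(\<Sum>i<k. rderiv (h (X i \<omega>)) (m + r)) \<le> 0 \<or> (\<Sum>i<k. - rderiv (h (X i \<omega>)) (m - r)) \<le> 0"
proof -
  have "(\<Sum>i<k. h (X i \<omega>) mh) \<le> (\<Sum>i<k. h (X i \<omega>) u)" for u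
    using min[of u] \<open>1 \<le> k\<close> by (simp add: empM_def sum_subtractf divide_le_cancel)
  note sign = convex_sum_rderiv_sign_at_minimizer[of "{..<k}" "\<lambda>i. h (X i \<omega>)", OF _ this]
  show ?thesis
  proof (cases "m + r < mh")
    case True
    then show ?thesis using sign(1) convex by auto
  next
    case False
    then have "mh < m - r" using far by linarith
    then show ?thesis using sign(2) convex by (auto simp: sum_negf)
  qed
qed

theorem proposition1:
  fixes Q :: "'s measure" and P :: "'w measure"
    and h :: "'s \<Rightarrow> real \<Rightarrow> real" and t0 :: real
    and X :: "nat \<Rightarrow> 'w \<Rightarrow> 's" and mhat :: "nat \<Rightarrow> 'w \<Rightarrow> real"
    and m s x0 :: real
  assumes probQ: "prob_space Q"
    and meas_h: "\<And>t. (\<lambda>x. h x t) \<in> borel_measurable Q"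
    and conv_h: "\<And>x. x \<in> space Q \<Longrightarrow> convex_on UNIV (h x)"
    and int_Dp: "\<And>t. integrable Q (\<lambda>x. rderiv (h x) t)"
    and int_Dm: "\<And>t. integrable Q (\<lambda>x. lderiv (h x) t)"
    and probP: "prob_space P"
    and meas_X: "\<And>i. X i \<in> measurable P Q"
    and law_X: "\<And>i. distr P Q (X i) = Q"
    and indep_X: "prob_space.indep_vars P (\<lambda>_. Q) X UNIV"
    and mhat_meas: "\<And>n. mhat n \<in> borel_measurable P"
    and mhat_min: "\<And>n \<omega> t. n \<ge> 1 \<Longrightarrow> \<omega> \<in> space P \<Longrightarrow>
                      empM X h t0 n \<omega> (mhat n \<omega>) \<le> empM X h t0 n \<omega> t"
    and mhat_smallest: "\<And>n \<omega> t. n \<ge> 1 \<Longrightarrow> \<omega> \<in> space P \<Longrightarrow>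
                      (\<forall>u. empM X h t0 n \<omega> t \<le> empM X h t0 n \<omega> u) \<Longrightarrow> mhat n \<omega> \<le> t"
    and m_min: "\<And>t. popM Q h t0 m \<le> popM Q h t0 t"
    and m_unique: "\<And>t. (\<forall>u. popM Q h t0 t \<le> popM Q h t0 u) \<Longrightarrow> t = m"
    and s_gt1: "s > 1"
    and x0_pos: "x0 > 0"
    and moment: "\<And>y. y \<in> {-x0..x0} \<Longrightarrow>
                   (\<integral>\<^sup>+ \<omega>. ennreal (\<bar>rderiv (h (X 0 \<omega>)) (m + y)\<bar> powr s) \<partial>P) < \<infinity>"
  shows "\<forall>x>0. (\<lambda>n. measure P {\<omega> \<in> space P. \<exists>k\<ge>n. \<bar>mhat k \<omega> - m\<bar> > x})
                 \<in> o(\<lambda>n. real n powr (1 - s))"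
proof (intro allI impI)
  fix x :: real assume "x > 0"
  interpret iid_sequence P Q X
    by (intro iid_sequence.intro iid_sequence_axioms.intro probP meas_X law_X indep_X)
  define r where "r = min x x0"
  have r: "0 < r" "r \<le> x" "r \<in> {-x0..x0}" "- r \<in> {-x0..x0}"
    using \<open>x > 0\<close> x0_pos by (auto simp: r_def)
  have strict_min: "popM Q h t0 m < popM Q h t0 t" if "t \<noteq> m" for t
    using m_min[of t] m_unique[of t] m_min that by (metis order.strict_iff_order order_trans)
  note signs = integral_rderiv_sign_at_strict_minimizer[OF meas_h conv_h int_Dp strict_min r(1)]
  have rderiv_meas [measurable]: "(\<lambda>y. rderiv (h y) t) \<in> borel_measurable Q" for t
    using int_Dp by auto
  have moments: "integrable Q (\<lambda>y. \<bar>rderiv (h y) (m + v)\<bar> powr s)" if "v \<in> {-x0..x0}" for v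
    using moment[OF that] by (intro integrable_if_nn_integral_comp_X_finite) auto
  show "(\<lambda>n. measure P {\<omega> \<in> space P. \<exists>k\<ge>n. \<bar>mhat k \<omega> - m\<bar> > x}) \<in> o(\<lambda>n. real n powr (1 - s))"
  proof (rule P.measure_smallo_if_subset_Un[OF _ _ _
        partial_sums_nonpos_smallo[OF _ int_Dp signs(1) moments[OF r(3)] s_gt1]
        partial_sums_nonpos_smallo[of "\<lambda>y. - rderiv (h y) (m - r)", OF _ _ _ _ s_gt1]])
    show "\<forall>\<^sub>F n in sequentially. {\<omega> \<in> space P. \<exists>k\<ge>n. \<bar>mhat k \<omega> - m\<bar> > x}
        \<subseteq> {\<omega> \<in> space P. \<exists>k\<ge>n. (\<Sum>i<k. rderiv (h (X i \<omega>)) (m + r)) \<le> 0}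
          \<union> {\<omega> \<in> space P. \<exists>k\<ge>n. (\<Sum>i<k. - rderiv (h (X i \<omega>)) (m - r)) \<le> 0}"
      using eventually_ge_at_top[of 1]
    proof eventually_elim
      case (elim n)
      have "(\<Sum>i<k. rderiv (h (X i \<omega>)) (m + r)) \<le> 0 \<or> (\<Sum>i<k. - rderiv (h (X i \<omega>)) (m - r)) \<le> 0"
        if "\<omega> \<in> space P" "n \<le> k" "x < \<bar>mhat k \<omega> - m\<bar>" for \<omega> k
        using that elim r
        by (intro empM_minimizer_far_imp_sum_rderiv[OF _ _ mhat_min[of k \<omega>]] conv_h
            measurable_space[OF meas_X]) auto
      then show ?case by blast
    qed
  qed (use moments[OF r(4)] signs(2) int_Dp in auto)
qed

end
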